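(* Let $N, D \ge 1$, let $X \in \mathbb{R}^{N\times D}$, and let $\lambda^2>0$, $\rho^2>0$. For $\sigma^2>0$ set $\gamma=\exp(-\lambda^2/(2\sigma^2))$. For a feature allocation $(K^+,Z)$ with $Z'Z$ invertible define $p(X,Z)=p(X\mid Z)\,p(Z)$ where $$p(Z)=\frac{\gamma^{K^+}\exp\{-\sum_{n=1}^N\gamma/n\}}{\prod_{h=1}^H\tilde K_h!}\prod_{k=1}^{K^+}S_{N,k}^{-1}\binom{N}{S_{N,k}}^{-1}$$ and $p(X\mid Z)=\int p(X\mid Z,A)\,p(A)\,dA$ with $p(X\mid Z,A)=(2\pi\sigma^2)^{-ND/2}\exp\{-\operatorname{tr}((X-ZA)'(X-ZA))/(2\sigma^2)\}$ and the rows of $A\in\mathbb{R}^{K^+\times D}$ i.i.d. $\mathcal{N}(0,\rho^2I_D)$ under $p(A)$. Then for fixed $K^+,Z$, as $\sigma^2\to0$, $$-2\sigma^2\log p(X,Z)\sim\operatorname{tr}\big(X'(I_N-Z(Z'Z)^{-1}Z')X\big)+K^+\lambda^2,$$ so the MAP problem for $Z$ is asymptotically equivalent to $\operatorname{argmin}_{K^+,Z}\operatorname{tr}(X'(I_N-Z(Z'Z)^{-1}Z')X)+K^+\lambda^2$.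
   Context: A feature allocation is an integer $K^+\ge0$ and a binary matrix $Z=(z_{nk})\in\{0,1\}^{N\times K^+}$ with every column nonzero (rows may have any number of ones). $S_{N,k}=\sum_nz_{nk}$; $H$ is the number of distinct columns of $Z$ and $\tilde K_h$ is the number of columns equal to the $h$-th distinct column. $p(Z)$ is the Indian buffet process probability with mass parameter $\gamma$. $f(\sigma^2)\sim g(\sigma^2)$ means $f(\sigma^2)/g(\sigma^2)\to1$ as $\sigma^2\to0$. *)

theory Defs
  imports "Jordan_Normal_Form.Gauss_Jordan_Elimination" "HOL-Probability.Probability"
    "HOL-Library.Landau_Symbols"
begin

definition mat_trace :: "real mat \<Rightarrow> real" where
  "mat_trace A = (\<Sum>i<dim_row A. A $$ (i, i))"

(* A feature allocation with K^+ = dim_col Z features on N = dim_row Z objects: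
   binary entries and every column nonzero. *)
definition feature_allocation :: "real mat \<Rightarrow> bool" where
  "feature_allocation Z \<longleftrightarrow>
     (\<forall>n<dim_row Z. \<forall>k<dim_col Z. Z $$ (n, k) = 0 \<or> Z $$ (n, k) = 1) \<and>
     (\<forall>k<dim_col Z. \<exists>n<dim_row Z. Z $$ (n, k) = 1)"

definition feat_count :: "real mat \<Rightarrow> nat \<Rightarrow> nat" where
  "feat_count Z k = card {n. n < dim_row Z \<and> Z $$ (n, k) = 1}"

(* The product over distinct columns h of Ktilde_h! is written as the product,
   over the set of distinct columns c, of (number of columns equal to c)!. *)
definition ibp_prob :: "real \<Rightarrow> real mat \<Rightarrow> real" where
  "ibp_prob \<gamma> Z =
     (let N = dim_row Z; K = dim_col Z in
      \<gamma> ^ K * exp (- (\<Sum>n=1..N. \<gamma> / real n))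
      / (\<Prod>c\<in>{Matrix.col Z k | k. k < K}. fact (card {k. k < K \<and> Matrix.col Z k = c}))
      * (\<Prod>k<K. 1 / (real (feat_count Z k) * real (N choose feat_count Z k))))"

definition lik_XZA :: "real \<Rightarrow> real mat \<Rightarrow> real mat \<Rightarrow> real mat \<Rightarrow> real" where
  "lik_XZA s X Z A =
     (2 * pi * s) powr (- real (dim_row X * dim_col X) / 2)
     * exp (- mat_trace ((X - Z * A)\<^sup>T * (X - Z * A)) / (2 * s))"

(* p(X | Z) = integral over A in R^{K x D} of p(X|Z,A) p(A) dA, entries of A
   i.i.d. N(0, rho^2) (i.e. rows i.i.d. N(0, rho^2 I_D)). *)
definition marg_XZ :: "real \<Rightarrow> real \<Rightarrow> real mat \<Rightarrow> real mat \<Rightarrow> real" where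
  "marg_XZ s rho2 X Z =
     (let K = dim_col Z; D = dim_col X; I = {0..<K} \<times> {0..<D} in
      \<integral>a. lik_XZA s X Z (Matrix.mat K D a)
            * (\<Prod>i\<in>I. normal_density 0 (sqrt rho2) (a i))
        \<partial>(PiM I (\<lambda>_. lborel)))"

definition joint_XZ :: "real \<Rightarrow> real \<Rightarrow> real \<Rightarrow> real mat \<Rightarrow> real mat \<Rightarrow> real" where
  "joint_XZ s lam2 rho2 X Z = marg_XZ s rho2 X Z * ibp_prob (exp (- lam2 / (2 * s))) Z"

end

theory Submission
  imports Defs "HOL-Real_Asymp.Real_Asymp"
begin

(*
  Completing the square around the least-squares solution Ahat = (Z'Z)^{-1} Z'X gives
    tr((X - ZA)'(X - ZA)) = T + |Z (Ahat - A)|^2,   T = tr(X'(I - Z (Z'Z)^{-1} Z') X).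
  So the Gaussian likelihood is at most (2 pi sigma^2)^{-ND/2} exp(-T / (2 sigma^2)), and on the box of
  half-width sigma around Ahat, where the prior density is bounded below, it is at least the same
  quantity with T replaced by T + O(sigma^2). The box volume only contributes sigma^2 log sigma^2 terms,
  hence -2 sigma^2 log p(X|Z) tends to T. The IBP prior is gamma^K exp(-gamma H_N) times a positive
  constant and gamma^K = exp(-K lambda^2 / (2 sigma^2)), so -2 sigma^2 log p(Z) tends to K lambda^2.
  A limit T + K lambda^2 different from 0 turns convergence into asymptotic equivalence.
*)

section \<open>Least squares\<close>

definition frobenius_inner :: "real mat \<Rightarrow> real mat \<Rightarrow> real" where
  "frobenius_inner A B = (\<Sum>i<dim_row A. \<Sum>j<dim_col A. A $$ (i, j) * B $$ (i, j))"

lemma frobenius_inner_self_nonneg: "0 \<le> frobenius_inner A A"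
  unfolding frobenius_inner_def by (intro sum_nonneg) auto

lemma frobenius_inner_zero_left [simp]: "frobenius_inner (0\<^sub>m n m) B = 0"
  unfolding frobenius_inner_def by simp

lemma frobenius_inner_commute:
  assumes "A \<in> carrier_mat n m" "B \<in> carrier_mat n m"
  shows "frobenius_inner A B = frobenius_inner B A"
  using assms unfolding frobenius_inner_def by (simp add: mult.commute)

lemma frobenius_inner_add_left:
  assumes "A \<in> carrier_mat n m" "B \<in> carrier_mat n m"
  shows "frobenius_inner (A + B) C = frobenius_inner A C + frobenius_inner B C"
  using assms unfolding frobenius_inner_def by (simp add: distrib_right sum.distrib)

lemma frobenius_inner_add_self:
  assumes "A \<in> carrier_mat n m" "B \<in> carrier_mat n m"
  shows "frobenius_inner (A + B) (A + B) =
         frobenius_inner A A + 2 * frobenius_inner A B + frobenius_inner B B"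
  using assms unfolding frobenius_inner_def
  by (simp add: algebra_simps sum.distrib sum_distrib_left)

lemma index_mult_mat_sum:
  assumes "A \<in> carrier_mat n m" "B \<in> carrier_mat m p" "i < n" "j < p"
  shows "(A * B) $$ (i, j) = (\<Sum>k<m. A $$ (i, k) * B $$ (k, j))"
  using assms by (simp add: scalar_prod_def lessThan_atLeast0)

lemma mat_trace_transpose_mult:
  assumes A: "A \<in> carrier_mat n m" and B: "B \<in> carrier_mat n m"
  shows "mat_trace (A\<^sup>T * B) = frobenius_inner A B"
proof -
  have "mat_trace (A\<^sup>T * B) = (\<Sum>j<m. \<Sum>i<n. A $$ (i, j) * B $$ (i, j))"
    unfolding mat_trace_def using A B
    by (intro sum.cong) (auto simp: scalar_prod_def lessThan_atLeast0)
  also have "\<dots> = frobenius_inner A B"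
    unfolding frobenius_inner_def using A by (subst sum.swap) simp
  finally show ?thesis .
qed

lemma frobenius_inner_mult_right:
  assumes A: "A \<in> carrier_mat n m" and Z: "Z \<in> carrier_mat n k" and B: "B \<in> carrier_mat k m"
  shows "frobenius_inner A (Z * B) = frobenius_inner (Z\<^sup>T * A) B"
proof -
  have "frobenius_inner A (Z * B) = mat_trace (A\<^sup>T * (Z * B))"
    using A Z B by (simp add: mat_trace_transpose_mult)
  also have "A\<^sup>T * (Z * B) = (Z\<^sup>T * A)\<^sup>T * B"
    using A Z B by (simp add: transpose_mult[of _ k n])
  also have "mat_trace \<dots> = frobenius_inner (Z\<^sup>T * A) B"
    using A Z B by (intro mat_trace_transpose_mult) auto
  finally show ?thesis .
qed

lemma frobenius_inner_mult_self_le: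
  assumes Z: "Z \<in> carrier_mat N K" and B: "B \<in> carrier_mat K D" and \<delta>: "0 \<le> \<delta>"
    and B_le: "\<And>k j. k < K \<Longrightarrow> j < D \<Longrightarrow> \<bar>B $$ (k, j)\<bar> \<le> \<delta>"
  shows "frobenius_inner (Z * B) (Z * B) \<le> real (N * D) * ((\<Sum>i<N. \<Sum>k<K. \<bar>Z $$ (i, k)\<bar>) * \<delta>)\<^sup>2"
proof -
  let ?S = "\<Sum>i<N. \<Sum>k<K. \<bar>Z $$ (i, k)\<bar>"
  have entry: "((Z * B) $$ (i, j))\<^sup>2 \<le> (?S * \<delta>)\<^sup>2" if ij: "i < N" "j < D" for i j
  proof -
    have "\<bar>(Z * B) $$ (i, j)\<bar> \<le> (\<Sum>k<K. \<bar>Z $$ (i, k)\<bar> * \<bar>B $$ (k, j)\<bar>)"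
      unfolding index_mult_mat_sum[OF Z B ij] by (rule order.trans[OF sum_abs]) (simp add: abs_mult)
    also have "\<dots> \<le> (\<Sum>k<K. \<bar>Z $$ (i, k)\<bar>) * \<delta>"
      unfolding sum_distrib_right using ij B_le by (intro sum_mono mult_left_mono) auto
    also have "\<dots> \<le> ?S * \<delta>"
      using ij \<delta> by (intro mult_right_mono member_le_sum[of i "{..<N}" "\<lambda>i. \<Sum>k<K. \<bar>Z $$ (i, k)\<bar>"])
        (auto intro: sum_nonneg)
    finally have "\<bar>(Z * B) $$ (i, j)\<bar> \<le> ?S * \<delta>" .
    from power_mono[OF this abs_ge_zero, of 2] show ?thesis by simp
  qed
  have "frobenius_inner (Z * B) (Z * B) = (\<Sum>i<N. \<Sum>j<D. ((Z * B) $$ (i, j))\<^sup>2)"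
    unfolding frobenius_inner_def using Z B by (simp add: power2_eq_square)
  also have "\<dots> \<le> (\<Sum>i<N. \<Sum>j<D. (?S * \<delta>)\<^sup>2)"
    by (intro sum_mono entry) auto
  finally show ?thesis by simp
qed

lemma mat_inverse_invertible_mat:
  fixes A :: "'a :: field mat"
  assumes A: "A \<in> carrier_mat n n" and inv: "invertible_mat A"
  shows "the (mat_inverse A) \<in> carrier_mat n n \<and> A * the (mat_inverse A) = 1\<^sub>m n"
proof -
  obtain B where AB: "inverts_mat A B" and BA: "inverts_mat B A"
    using inv unfolding invertible_mat_def by blast
  have "dim_row B = n"
    using arg_cong[OF BA[unfolded inverts_mat_def], of dim_col] A by simp
  moreover have "dim_col B = n"
    using arg_cong[OF AB[unfolded inverts_mat_def], of dim_col] A by simp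
  ultimately have "B \<in> carrier_mat n n" "A * B = 1\<^sub>m n" "B * A = 1\<^sub>m n"
    using AB BA A unfolding inverts_mat_def by auto
  then have "A \<in> Units (ring_mat TYPE('a) n ())"
    using A unfolding Units_def by (auto simp: ring_mat_simps)
  then obtain C where "mat_inverse A = Some C"
    using mat_inverse(1)[OF A, where b = "()"] by (cases "mat_inverse A") auto
  then show ?thesis using mat_inverse(2)[OF A] by auto
qed

lemma least_squares_decomposition:
  fixes X Z M A :: "real mat"
  assumes Z: "Z \<in> carrier_mat N K" and X: "X \<in> carrier_mat N D" and M: "M \<in> carrier_mat K K"
    and ZZM: "Z\<^sup>T * Z * M = 1\<^sub>m K" and A: "A \<in> carrier_mat K D"
  shows "mat_trace ((X - Z * A)\<^sup>T * (X - Z * A)) =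
         mat_trace (X\<^sup>T * (1\<^sub>m N - Z * M * Z\<^sup>T) * X)
         + frobenius_inner (Z * (M * (Z\<^sup>T * X) - A)) (Z * (M * (Z\<^sup>T * X) - A))"
proof -
  define Ahat where "Ahat = M * (Z\<^sup>T * X)"
  define R where "R = X - Z * Ahat"
  define B where "B = Ahat - A"
  have ZT: "Z\<^sup>T \<in> carrier_mat K N" using Z by simp
  have Ahat: "Ahat \<in> carrier_mat K D" and R: "R \<in> carrier_mat N D" and B: "B \<in> carrier_mat K D"
    using X Z M A unfolding Ahat_def R_def B_def by auto
  have "Z * M * Z\<^sup>T * X = (Z * M) * (Z\<^sup>T * X)"
    using X Z M ZT by (intro assoc_mult_mat[of _ N K _ N _ D]) auto
  also have "\<dots> = Z * Ahat"
    using X Z M ZT unfolding Ahat_def by (intro assoc_mult_mat[of _ N K _ K _ D]) auto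
  finally have "Z * M * Z\<^sup>T * X = Z * Ahat" .
  then have R_proj: "R = (1\<^sub>m N - Z * M * Z\<^sup>T) * X"
    using X Z M ZT unfolding R_def by (simp add: minus_mult_distrib_mat[of _ N N])
  have "Z\<^sup>T * (Z * Ahat) = (Z\<^sup>T * Z) * (M * (Z\<^sup>T * X))"
    using X Z M ZT unfolding Ahat_def by (intro assoc_mult_mat[symmetric, of _ K N _ K _ D]) auto
  also have "\<dots> = (Z\<^sup>T * Z * M) * (Z\<^sup>T * X)"
    using X Z M ZT by (intro assoc_mult_mat[symmetric, of _ K K _ K _ D]) auto
  finally have "Z\<^sup>T * (Z * Ahat) = Z\<^sup>T * X" using ZZM ZT X by simp
  then have ZR: "Z\<^sup>T * R = 0\<^sub>m K D"
    using X Z ZT Ahat unfolding R_def by (simp add: mult_minus_distrib_mat[of _ K N])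
  have orth: "frobenius_inner R (Z * C) = 0" if "C \<in> carrier_mat K D" for C
    using frobenius_inner_mult_right[OF R Z that] ZR by simp
  have "X - Z * A = R + Z * B"
    using X Z Ahat A unfolding R_def B_def by (intro eq_matI) (auto simp: mult_minus_distrib_mat[of _ N K])
  then have "mat_trace ((X - Z * A)\<^sup>T * (X - Z * A)) = frobenius_inner (R + Z * B) (R + Z * B)"
    using R Z B by (simp add: mat_trace_transpose_mult[of _ N D])
  also have "\<dots> = frobenius_inner R R + frobenius_inner (Z * B) (Z * B)"
    using R Z B by (simp add: frobenius_inner_add_self[of _ N D] orth)
  also have "frobenius_inner R R = mat_trace (X\<^sup>T * (1\<^sub>m N - Z * M * Z\<^sup>T) * X)"
  proof -
    have "X = R + Z * Ahat" using X Z Ahat unfolding R_def by (intro eq_matI) auto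
    then have "frobenius_inner X R = frobenius_inner R R"
      using R Z Ahat orth[OF Ahat]
      by (simp add: frobenius_inner_add_left[of _ N D] frobenius_inner_commute[of "Z * Ahat" N D])
    also have "frobenius_inner X R = mat_trace (X\<^sup>T * R)"
      using X R by (simp add: mat_trace_transpose_mult)
    also have "X\<^sup>T * R = X\<^sup>T * (1\<^sub>m N - Z * M * Z\<^sup>T) * X"
      unfolding R_proj using X Z M by (subst assoc_mult_mat[of _ D N _ N]) auto
    finally show ?thesis by simp
  qed
  finally show ?thesis unfolding B_def Ahat_def .
qed

lemma least_squares_residual_ge:
  assumes "Z \<in> carrier_mat N K" "X \<in> carrier_mat N D" "M \<in> carrier_mat K K"
    and "Z\<^sup>T * Z * M = 1\<^sub>m K" and "A \<in> carrier_mat K D"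
  shows "mat_trace (X\<^sup>T * (1\<^sub>m N - Z * M * Z\<^sup>T) * X) \<le> mat_trace ((X - Z * A)\<^sup>T * (X - Z * A))"
  using least_squares_decomposition[OF assms] frobenius_inner_self_nonneg by simp

lemma least_squares_residual_near:
  assumes Z: "Z \<in> carrier_mat N K" and X: "X \<in> carrier_mat N D" and M: "M \<in> carrier_mat K K"
    and ZZM: "Z\<^sup>T * Z * M = 1\<^sub>m K" and A: "A \<in> carrier_mat K D" and \<delta>: "0 \<le> \<delta>"
    and close: "\<And>k j. k < K \<Longrightarrow> j < D \<Longrightarrow> \<bar>A $$ (k, j) - (M * (Z\<^sup>T * X)) $$ (k, j)\<bar> \<le> \<delta>"
  shows "mat_trace ((X - Z * A)\<^sup>T * (X - Z * A))
         \<le> mat_trace (X\<^sup>T * (1\<^sub>m N - Z * M * Z\<^sup>T) * X)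
           + real (N * D) * ((\<Sum>i<N. \<Sum>k<K. \<bar>Z $$ (i, k)\<bar>) * \<delta>)\<^sup>2"
proof -
  have Ahat: "M * (Z\<^sup>T * X) \<in> carrier_mat K D" using M Z X by auto
  then have "M * (Z\<^sup>T * X) - A \<in> carrier_mat K D" using A by auto
  moreover have "\<bar>(M * (Z\<^sup>T * X) - A) $$ (k, j)\<bar> \<le> \<delta>" if "k < K" "j < D" for k j
    using close[OF that] Ahat A that by (simp add: abs_minus_commute)
  ultimately show ?thesis
    using least_squares_decomposition[OF Z X M ZZM A] frobenius_inner_mult_self_le[OF Z _ \<delta>] by simp
qed

section \<open>Integrals over finite products of Lebesgue measure\<close>

lemma integral_PiM_lborel_ge_on_box:
  fixes f :: "('i \<Rightarrow> real) \<Rightarrow> real" and m :: "'i \<Rightarrow> real"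
  assumes I: "finite I" and f: "integrable (PiM I (\<lambda>_. lborel)) f"
    and nonneg: "\<And>a. 0 \<le> f a" and \<delta>: "0 \<le> \<delta>"
    and box: "\<And>a. (\<And>i. i \<in> I \<Longrightarrow> \<bar>a i - m i\<bar> \<le> \<delta>) \<Longrightarrow> v \<le> f a"
  shows "v * (2 * \<delta>) ^ card I \<le> integral\<^sup>L (PiM I (\<lambda>_. lborel)) f"
proof -
  interpret product_sigma_finite "\<lambda>_. lborel :: real measure" by standard
  define g where "g a = v * (\<Prod>i\<in>I. indicator {m i - \<delta>..m i + \<delta>} (a i) :: real)" for a
  have ind: "integrable lborel (indicator {m i - \<delta>..m i + \<delta>} :: real \<Rightarrow> real)" for i
    by (auto intro!: integrable_real_indicator simp: emeasure_lborel_Icc_eq)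
  have g: "integrable (PiM I (\<lambda>_. lborel)) g"
    unfolding g_def by (intro integrable_mult_right product_integrable_prod[OF I] ind)
  have "integral\<^sup>L (PiM I (\<lambda>_. lborel)) g = v * (\<Prod>i\<in>I. \<integral>x. indicator {m i - \<delta>..m i + \<delta>} x \<partial>lborel)"
    unfolding g_def
    by (simp only: integral_mult_right_zero product_integral_prod[OF I ind])
  also have "\<dots> = v * (2 * \<delta>) ^ card I" using \<delta> by simp
  finally have "integral\<^sup>L (PiM I (\<lambda>_. lborel)) g = v * (2 * \<delta>) ^ card I" .
  moreover have "integral\<^sup>L (PiM I (\<lambda>_. lborel)) g \<le> integral\<^sup>L (PiM I (\<lambda>_. lborel)) f"
  proof (rule integral_mono[OF g f])
    fix a
    show "g a \<le> f a"
    proof (cases "\<forall>i\<in>I. a i \<in> {m i - \<delta>..m i + \<delta>}")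
      case True
      then have "g a = v" unfolding g_def by simp
      also have "v \<le> f a" using True by (intro box) (auto simp: abs_le_iff)
      finally show ?thesis .
    next
      case False
      then obtain i where "i \<in> I" "a i \<notin> {m i - \<delta>..m i + \<delta>}" by blast
      then have "g a = 0" unfolding g_def using I by (auto intro!: prod_zero bexI[of _ i])
      then show ?thesis using nonneg by simp
    qed
  qed
  ultimately show ?thesis by simp
qed

lemma integral_PiM_lborel_pos:
  fixes f :: "('i \<Rightarrow> real) \<Rightarrow> real"
  assumes I: "finite I" and f: "integrable (PiM I (\<lambda>_. lborel)) f" and pos: "\<And>a. 0 < f a"
  shows "0 < integral\<^sup>L (PiM I (\<lambda>_. lborel)) f"
proof -
  interpret product_sigma_finite "\<lambda>_. lborel :: real measure" by standard
  have "emeasure (PiM I (\<lambda>_. lborel :: real measure)) (PiE I (\<lambda>_. UNIV))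
      = (\<Prod>i\<in>I. emeasure lborel (UNIV :: real set))"
    using emeasure_PiM[OF I, of "\<lambda>_. UNIV"] by simp
  then have "space (PiM I (\<lambda>_. lborel)) \<notin> null_sets (PiM I (\<lambda>_. lborel :: real measure))"
    by (simp add: space_PiM null_sets_def top_power_ennreal)
  then have "\<not> (AE a in PiM I (\<lambda>_. lborel). f a = 0)"
    using pos by (simp add: AE_iff_null_sets less_le)
  moreover have "0 \<le> integral\<^sup>L (PiM I (\<lambda>_. lborel)) f"
    using pos by (simp add: less_imp_le)
  ultimately show ?thesis
    using integral_nonneg_eq_0_iff_AE[OF f] pos by (auto simp: less_le)
qed

lemma integrable_prod_normal_density:
  assumes "finite I" "0 < \<sigma>"
  shows "integrable (PiM I (\<lambda>_. lborel)) (\<lambda>a. \<Prod>i\<in>I. normal_density \<mu> \<sigma> (a i))"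
proof -
  interpret product_sigma_finite "\<lambda>_. lborel :: real measure" by standard
  show ?thesis using assms by (intro product_integrable_prod) (auto simp: integrable_normal_density)
qed

lemma integral_prod_normal_density:
  assumes "finite I" "0 < \<sigma>"
  shows "(\<integral>a. (\<Prod>i\<in>I. normal_density \<mu> \<sigma> (a i)) \<partial>PiM I (\<lambda>_. lborel)) = 1"
proof -
  interpret product_sigma_finite "\<lambda>_. lborel :: real measure" by standard
  show ?thesis using assms
    by (simp add: product_integral_prod[OF assms(1), of "\<lambda>_. normal_density \<mu> \<sigma>"]
        integrable_normal_density integral_normal_density)
qed

section \<open>The marginal likelihood\<close>

lemma normal_density_ge_of_abs_le:
  assumes "\<bar>x\<bar> \<le> r"
  shows "normal_density 0 \<sigma> r \<le> normal_density 0 \<sigma> x"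
proof -
  have "x\<^sup>2 \<le> r\<^sup>2" using power_mono[OF assms abs_ge_zero, of 2] by simp
  then have "- r\<^sup>2 / (2 * \<sigma>\<^sup>2) \<le> - x\<^sup>2 / (2 * \<sigma>\<^sup>2)"
    by (intro divide_right_mono) auto
  then show ?thesis unfolding normal_density_def by (intro mult_left_mono) auto
qed

lemma lik_XZA_pos: "0 < s \<Longrightarrow> 0 < lik_XZA s X Z A"
  unfolding lik_XZA_def by simp

lemma lik_XZA_le:
  assumes "0 < s" "T \<le> mat_trace ((X - Z * A)\<^sup>T * (X - Z * A))"
  shows "lik_XZA s X Z A \<le> (2 * pi * s) powr (- real (dim_row X * dim_col X) / 2) * exp (- T / (2 * s))"
  using assms unfolding lik_XZA_def by (auto intro!: mult_left_mono divide_right_mono)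

lemma lik_XZA_ge:
  assumes "0 < s" "mat_trace ((X - Z * A)\<^sup>T * (X - Z * A)) \<le> T"
  shows "(2 * pi * s) powr (- real (dim_row X * dim_col X) / 2) * exp (- T / (2 * s)) \<le> lik_XZA s X Z A"
  using assms unfolding lik_XZA_def by (auto intro!: mult_left_mono divide_right_mono)

lemma mat_trace_residual_mat:
  assumes X: "X \<in> carrier_mat N D" and Z: "Z \<in> carrier_mat N K"
  shows "mat_trace ((X - Z * Matrix.mat K D a)\<^sup>T * (X - Z * Matrix.mat K D a))
         = (\<Sum>i<N. \<Sum>j<D. (X $$ (i, j) - (\<Sum>k<K. Z $$ (i, k) * a (k, j)))\<^sup>2)"
proof -
  have W: "X - Z * Matrix.mat K D a \<in> carrier_mat N D" using X Z by auto
  show ?thesis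
    unfolding mat_trace_transpose_mult[OF W W] frobenius_inner_def using X Z
    by (intro sum.cong) (auto simp: power2_eq_square scalar_prod_def lessThan_atLeast0)
qed

lemma lik_XZA_mat_measurable:
  assumes X: "X \<in> carrier_mat N D" and Z: "Z \<in> carrier_mat N K"
  shows "(\<lambda>a. lik_XZA s X Z (Matrix.mat K D a)) \<in> borel_measurable (PiM ({0..<K} \<times> {0..<D}) (\<lambda>_. lborel))"
proof -
  have "(\<lambda>a. \<Sum>i<N. \<Sum>j<D. (X $$ (i, j) - (\<Sum>k<K. Z $$ (i, k) * a (k, j)))\<^sup>2)
          \<in> borel_measurable (PiM ({0..<K} \<times> {0..<D}) (\<lambda>_. lborel))"
  proof (intro borel_measurable_sum borel_measurable_power borel_measurable_diff
      borel_measurable_const borel_measurable_times)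
    fix j k assume "j \<in> {..<D}" "k \<in> {..<K}"
    then show "(\<lambda>a. a (k, j)) \<in> borel_measurable (PiM ({0..<K} \<times> {0..<D}) (\<lambda>_. lborel))"
      by (intro measurable_component_singleton[where M = "\<lambda>_. lborel", simplified]) auto
  qed
  then show ?thesis
    unfolding lik_XZA_def mat_trace_residual_mat[OF X Z] by measurable
qed

lemma integrable_marg_XZ_integrand:
  assumes X: "X \<in> carrier_mat N D" and Z: "Z \<in> carrier_mat N K" and rho2: "0 < rho2" and s: "0 < s"
  shows "integrable (PiM ({0..<K} \<times> {0..<D}) (\<lambda>_. lborel))
           (\<lambda>a. lik_XZA s X Z (Matrix.mat K D a)
                * (\<Prod>i\<in>{0..<K} \<times> {0..<D}. normal_density 0 (sqrt rho2) (a i)))"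
    (is "integrable ?M (\<lambda>a. ?lik a * ?dn a)")
proof -
  define C where "C = (2 * pi * s) powr (- real (N * D) / 2)"
  have dn: "integrable ?M ?dn" using rho2 by (intro integrable_prod_normal_density) auto
  have "?lik a \<le> C" for a
  proof -
    have W: "X - Z * Matrix.mat K D a \<in> carrier_mat N D" using X Z by auto
    have "0 \<le> mat_trace ((X - Z * Matrix.mat K D a)\<^sup>T * (X - Z * Matrix.mat K D a))"
      by (simp add: mat_trace_transpose_mult[OF W W] frobenius_inner_self_nonneg)
    from lik_XZA_le[OF s this] show ?thesis unfolding C_def using X by simp
  qed
  moreover have "0 \<le> ?lik a" "0 \<le> ?dn a" for a
    using lik_XZA_pos[OF s] by (auto intro: less_imp_le prod_nonneg)
  ultimately have "norm (?lik a * ?dn a) \<le> norm (C * ?dn a)" for a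
    by (auto simp: abs_mult intro!: mult_right_mono intro: order.trans[OF _ abs_ge_self])
  moreover have "(\<lambda>a. ?lik a * ?dn a) \<in> borel_measurable ?M"
    using lik_XZA_mat_measurable[OF X Z] borel_measurable_integrable[OF dn] by measurable
  ultimately show ?thesis
    by (intro Bochner_Integration.integrable_bound[OF integrable_mult_right[OF dn]]) auto
qed

lemma marg_XZ_pos:
  assumes X: "X \<in> carrier_mat N D" and Z: "Z \<in> carrier_mat N K" and rho2: "0 < rho2" and s: "0 < s"
  shows "0 < marg_XZ s rho2 X Z"
  unfolding marg_XZ_def Let_def using X Z rho2 s
  by (auto intro!: integral_PiM_lborel_pos integrable_marg_XZ_integrand mult_pos_pos lik_XZA_pos
      prod_pos normal_density_pos)

lemma marg_XZ_le:
  assumes X: "X \<in> carrier_mat N D" and Z: "Z \<in> carrier_mat N K" and rho2: "0 < rho2" and s: "0 < s"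
    and min: "\<And>A. A \<in> carrier_mat K D \<Longrightarrow> T \<le> mat_trace ((X - Z * A)\<^sup>T * (X - Z * A))"
  shows "marg_XZ s rho2 X Z \<le> (2 * pi * s) powr (- real (N * D) / 2) * exp (- T / (2 * s))"
proof -
  let ?M = "PiM ({0..<K} \<times> {0..<D}) (\<lambda>_. lborel :: real measure)"
  let ?dn = "\<lambda>a. \<Prod>i\<in>{0..<K} \<times> {0..<D}. normal_density 0 (sqrt rho2) (a i)"
  define C where "C = (2 * pi * s) powr (- real (N * D) / 2) * exp (- T / (2 * s))"
  have "marg_XZ s rho2 X Z = (\<integral>a. lik_XZA s X Z (Matrix.mat K D a) * ?dn a \<partial>?M)"
    unfolding marg_XZ_def Let_def using X Z by simp
  also have "\<dots> \<le> (\<integral>a. C * ?dn a \<partial>?M)"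
  proof (rule integral_mono)
    show "integrable ?M (\<lambda>a. lik_XZA s X Z (Matrix.mat K D a) * ?dn a)"
      using X Z rho2 s by (rule integrable_marg_XZ_integrand)
    show "integrable ?M (\<lambda>a. C * ?dn a)"
      using rho2 by (intro integrable_mult_right integrable_prod_normal_density) auto
    fix a
    have "lik_XZA s X Z (Matrix.mat K D a) \<le> C"
      unfolding C_def using X s by (intro order.trans[OF lik_XZA_le[OF s min]]) auto
    then show "lik_XZA s X Z (Matrix.mat K D a) * ?dn a \<le> C * ?dn a"
      by (intro mult_right_mono prod_nonneg) auto
  qed
  also have "\<dots> = C" using rho2 by (simp add: integral_prod_normal_density)
  finally show ?thesis unfolding C_def .
qed

lemma marg_XZ_ge:
  assumes X: "X \<in> carrier_mat N D" and Z: "Z \<in> carrier_mat N K" and rho2: "0 < rho2" and s: "0 < s"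
    and \<delta>: "0 \<le> \<delta>" and c: "0 \<le> c"
    and near: "\<And>A. A \<in> carrier_mat K D \<Longrightarrow>
                 (\<And>k j. k < K \<Longrightarrow> j < D \<Longrightarrow> \<bar>A $$ (k, j) - Ahat $$ (k, j)\<bar> \<le> \<delta>) \<Longrightarrow>
                 mat_trace ((X - Z * A)\<^sup>T * (X - Z * A)) \<le> T"
    and dens: "\<And>k j x. k < K \<Longrightarrow> j < D \<Longrightarrow> \<bar>x - Ahat $$ (k, j)\<bar> \<le> \<delta> \<Longrightarrow>
                 c \<le> normal_density 0 (sqrt rho2) x"
  shows "(2 * pi * s) powr (- real (N * D) / 2) * exp (- T / (2 * s)) * (2 * c * \<delta>) ^ (K * D)
         \<le> marg_XZ s rho2 X Z"
proof -
  let ?I = "{0..<K} \<times> {0..<D}"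
  let ?dn = "\<lambda>a. \<Prod>i\<in>?I. normal_density 0 (sqrt rho2) (a i)"
  define C where "C = (2 * pi * s) powr (- real (N * D) / 2) * exp (- T / (2 * s))"
  have "C * (2 * c * \<delta>) ^ (K * D) = C * c ^ card ?I * (2 * \<delta>) ^ card ?I"
    by (simp add: power_mult_distrib)
  also have "\<dots> \<le> (\<integral>a. lik_XZA s X Z (Matrix.mat K D a) * ?dn a \<partial>PiM ?I (\<lambda>_. lborel))"
  proof (rule integral_PiM_lborel_ge_on_box[where m = "\<lambda>(k, j). Ahat $$ (k, j)"])
    show "integrable (PiM ?I (\<lambda>_. lborel)) (\<lambda>a. lik_XZA s X Z (Matrix.mat K D a) * ?dn a)"
      using X Z rho2 s by (rule integrable_marg_XZ_integrand)
    show "0 \<le> lik_XZA s X Z (Matrix.mat K D a) * ?dn a" for a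
      using less_imp_le[OF lik_XZA_pos[OF s]] by (intro mult_nonneg_nonneg prod_nonneg) auto
    fix a assume box: "\<And>i. i \<in> ?I \<Longrightarrow> \<bar>a i - (case i of (k, j) \<Rightarrow> Ahat $$ (k, j))\<bar> \<le> \<delta>"
    have "C \<le> lik_XZA s X Z (Matrix.mat K D a)"
      unfolding C_def using X s box by (intro order.trans[OF _ lik_XZA_ge[OF s near]]) auto
    moreover have "c ^ card ?I \<le> ?dn a"
      unfolding prod_constant[symmetric] using c box by (intro prod_mono) (auto intro!: dens)
    ultimately show "C * c ^ card ?I \<le> lik_XZA s X Z (Matrix.mat K D a) * ?dn a"
      using c less_imp_le[OF lik_XZA_pos[OF s]] unfolding C_def by (intro mult_mono) auto
  qed (use \<delta> in auto)
  also have "\<dots> = marg_XZ s rho2 X Z"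
    unfolding marg_XZ_def Let_def using X Z by simp
  finally show ?thesis unfolding C_def .
qed

lemma tendsto_scaled_ln_sandwich:
  fixes f lo hi :: "real \<Rightarrow> real"
  assumes bounds: "\<forall>\<^sub>F s in at_right 0. 0 < lo s \<and> lo s \<le> f s \<and> f s \<le> hi s"
    and lo: "((\<lambda>s. - 2 * s * ln (lo s)) \<longlongrightarrow> T) (at_right 0)"
    and hi: "((\<lambda>s. - 2 * s * ln (hi s)) \<longlongrightarrow> T) (at_right 0)"
  shows "((\<lambda>s. - 2 * s * ln (f s)) \<longlongrightarrow> T) (at_right 0)"
proof (rule tendsto_sandwich[OF _ _ hi lo])
  show "\<forall>\<^sub>F s in at_right 0. - 2 * s * ln (hi s) \<le> - 2 * s * ln (f s)"
    using bounds eventually_at_right_less by eventually_elim (auto intro!: mult_left_mono_neg)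
  show "\<forall>\<^sub>F s in at_right 0. - 2 * s * ln (f s) \<le> - 2 * s * ln (lo s)"
    using bounds eventually_at_right_less by eventually_elim (auto intro!: mult_left_mono_neg)
qed

lemma gaussian_scaled_ln_limit:
  "((\<lambda>s. - 2 * s * ln ((2 * pi * s) powr (- real n / 2) * exp (- T / (2 * s)))) \<longlongrightarrow> T)
     (at_right 0)"
proof (rule Lim_transform_eventually)
  show "((\<lambda>s. real n * (s * ln (2 * pi) + s * ln s) + T) \<longlongrightarrow> T) (at_right 0)"
    by real_asymp
  show "\<forall>\<^sub>F s in at_right 0. real n * (s * ln (2 * pi) + s * ln s) + T
          = - 2 * s * ln ((2 * pi * s) powr (- real n / 2) * exp (- T / (2 * s)))"
    using eventually_at_right_less
    by eventually_elim (simp add: ln_mult field_simps)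
qed

lemma gaussian_box_scaled_ln_limit:
  assumes c: "0 < c"
  shows "((\<lambda>s. - 2 * s * ln ((2 * pi * s) powr (- real n / 2) * exp (- (T + E * s) / (2 * s))
                            * (2 * c * sqrt s) ^ m)) \<longlongrightarrow> T) (at_right 0)"
proof (rule Lim_transform_eventually)
  show "((\<lambda>s. real n * (s * ln (2 * pi) + s * ln s) + T + E * s
            - 2 * real m * (s * ln (2 * c) + s * ln s / 2)) \<longlongrightarrow> T) (at_right 0)"
    by real_asymp
  show "\<forall>\<^sub>F s in at_right 0. real n * (s * ln (2 * pi) + s * ln s) + T + E * s
            - 2 * real m * (s * ln (2 * c) + s * ln s / 2)
          = - 2 * s * ln ((2 * pi * s) powr (- real n / 2) * exp (- (T + E * s) / (2 * s))
                          * (2 * c * sqrt s) ^ m)"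
    using eventually_at_right_less
    by eventually_elim (use c in \<open>simp add: ln_mult ln_realpow ln_sqrt field_simps\<close>)
qed

lemma marg_XZ_log_limit:
  fixes X Z :: "real mat"
  assumes X: "X \<in> carrier_mat N D" and Z: "Z \<in> carrier_mat N K"
    and inv: "invertible_mat (Z\<^sup>T * Z)" and rho2: "0 < rho2"
  shows "((\<lambda>s. - 2 * s * ln (marg_XZ s rho2 X Z))
          \<longlongrightarrow> mat_trace (X\<^sup>T * (1\<^sub>m N - Z * the (mat_inverse (Z\<^sup>T * Z)) * Z\<^sup>T) * X)) (at_right 0)"
proof -
  define M where "M = the (mat_inverse (Z\<^sup>T * Z))"
  have M: "M \<in> carrier_mat K K" and ZZM: "Z\<^sup>T * Z * M = 1\<^sub>m K"
    using mat_inverse_invertible_mat[OF _ inv] Z unfolding M_def by auto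
  define T where "T = mat_trace (X\<^sup>T * (1\<^sub>m N - Z * M * Z\<^sup>T) * X)"
  define Ahat where "Ahat = M * (Z\<^sup>T * X)"
  define E where "E = real (N * D) * (\<Sum>i<N. \<Sum>k<K. \<bar>Z $$ (i, k)\<bar>)\<^sup>2"
  define R where "R = (\<Sum>k<K. \<Sum>j<D. \<bar>Ahat $$ (k, j)\<bar>) + 1"
  define c where "c = normal_density 0 (sqrt rho2) R"
  have c: "0 < c" unfolding c_def using rho2 by (intro normal_density_pos) simp
  have dens: "c \<le> normal_density 0 (sqrt rho2) x"
    if "k < K" "j < D" "\<bar>x - Ahat $$ (k, j)\<bar> \<le> 1" for k j x
  proof -
    have "\<bar>Ahat $$ (k, j)\<bar> \<le> (\<Sum>j<D. \<bar>Ahat $$ (k, j)\<bar>)"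
      using that by (intro member_le_sum) auto
    also have "\<dots> \<le> (\<Sum>k<K. \<Sum>j<D. \<bar>Ahat $$ (k, j)\<bar>)"
      using that by (intro member_le_sum[of k "{..<K}" "\<lambda>k. \<Sum>j<D. \<bar>Ahat $$ (k, j)\<bar>"])
        (auto intro: sum_nonneg)
    finally have "\<bar>x\<bar> \<le> R" unfolding R_def using that by linarith
    then show ?thesis unfolding c_def by (rule normal_density_ge_of_abs_le)
  qed
  have near: "mat_trace ((X - Z * A)\<^sup>T * (X - Z * A)) \<le> T + E * s"
    if "A \<in> carrier_mat K D" "0 < s"
      "\<And>k j. k < K \<Longrightarrow> j < D \<Longrightarrow> \<bar>A $$ (k, j) - Ahat $$ (k, j)\<bar> \<le> sqrt s" for A s
    using least_squares_residual_near[OF Z X M ZZM that(1) _ that(3)[unfolded Ahat_def]] that(2)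
    unfolding T_def E_def Ahat_def by (simp add: power_mult_distrib)
  have small: "\<forall>\<^sub>F s in at_right 0. 0 < s \<and> s < (1::real)"
    unfolding eventually_at_right_field by (intro exI[of _ 1]) auto
  show ?thesis unfolding T_def[symmetric] M_def[symmetric]
  proof (rule tendsto_scaled_ln_sandwich[OF _ gaussian_box_scaled_ln_limit[OF c] gaussian_scaled_ln_limit])
    \<comment> \<open>Box half-width \<open>sqrt s\<close>: the excess \<open>E (sqrt s)\<^sup>2 / (2 s)\<close> stays bounded.\<close>
    show "\<forall>\<^sub>F s in at_right 0.
            0 < (2 * pi * s) powr (- real (N * D) / 2) * exp (- (T + E * s) / (2 * s))
                * (2 * c * sqrt s) ^ (K * D)
          \<and> (2 * pi * s) powr (- real (N * D) / 2) * exp (- (T + E * s) / (2 * s))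
                * (2 * c * sqrt s) ^ (K * D) \<le> marg_XZ s rho2 X Z
          \<and> marg_XZ s rho2 X Z \<le> (2 * pi * s) powr (- real (N * D) / 2) * exp (- T / (2 * s))"
      using small
    proof eventually_elim
      case (elim s)
      then have s: "0 < s" "sqrt s \<le> 1" by auto
      have "(2 * pi * s) powr (- real (N * D) / 2) * exp (- (T + E * s) / (2 * s))
              * (2 * c * sqrt s) ^ (K * D) \<le> marg_XZ s rho2 X Z"
        using s c by (intro marg_XZ_ge[OF X Z rho2 s(1), where Ahat = Ahat])
          (auto intro: dens[OF _ _ order.trans[OF _ s(2)]] near)
      then show ?case
        using c s marg_XZ_le[OF X Z rho2 s(1) least_squares_residual_ge[OF Z X M ZZM]]
        unfolding T_def by simp
    qed
  qed
qed

section \<open>The Indian buffet process prior\<close>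

lemma feat_count_bounds:
  assumes "feature_allocation Z" "k < dim_col Z"
  shows "0 < feat_count Z k \<and> feat_count Z k \<le> dim_row Z"
proof -
  let ?S = "{n. n < dim_row Z \<and> Z $$ (n, k) = 1}"
  have sub: "?S \<subseteq> {..<dim_row Z}" by auto
  moreover obtain n where "n \<in> ?S" using assms unfolding feature_allocation_def by blast
  ultimately show ?thesis
    unfolding feat_count_def using card_mono[OF _ sub] by (auto simp: card_gt_0_iff finite_subset)
qed

lemma ibp_prob_factor:
  assumes fa: "feature_allocation Z"
  obtains W where "0 < W"
    and "\<And>\<gamma>. ibp_prob \<gamma> Z = \<gamma> ^ dim_col Z * exp (- \<gamma> * (\<Sum>n=1..dim_row Z. 1 / real n)) * W"
proof
  define K where "K = dim_col Z"
  define N where "N = dim_row Z"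
  define P where "P = (\<Prod>c\<in>{Matrix.col Z k | k. k < K}. fact (card {k. k < K \<and> Matrix.col Z k = c}) :: real)"
  define Q where "Q = (\<Prod>k<K. 1 / (real (feat_count Z k) * real (N choose feat_count Z k)))"
  show "ibp_prob \<gamma> Z = \<gamma> ^ K * exp (- \<gamma> * (\<Sum>n=1..N. 1 / real n)) * (Q / P)" for \<gamma>
    unfolding ibp_prob_def Let_def K_def[symmetric] N_def[symmetric] P_def[symmetric] Q_def[symmetric]
    by (simp add: sum_distrib_left sum_negf)
  have "0 < Q" unfolding Q_def
    using feat_count_bounds[OF fa] by (intro prod_pos) (auto simp: K_def N_def zero_less_binomial)
  moreover have "0 < P" unfolding P_def by (intro prod_pos) auto
  ultimately show "0 < Q / P" by simp
qed

lemma ibp_prob_pos: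
  assumes "feature_allocation Z" "0 < \<gamma>"
  shows "0 < ibp_prob \<gamma> Z"
  using assms by (metis ibp_prob_factor exp_gt_zero mult_pos_pos zero_less_power)

lemma ibp_prob_log_limit:
  assumes fa: "feature_allocation Z" and lam2: "0 \<le> lam2"
  shows "((\<lambda>s. - 2 * s * ln (ibp_prob (exp (- lam2 / (2 * s))) Z)) \<longlongrightarrow> real (dim_col Z) * lam2)
           (at_right 0)"
proof -
  obtain W where W: "0 < W"
    and ibp: "\<And>\<gamma>. ibp_prob \<gamma> Z = \<gamma> ^ dim_col Z * exp (- \<gamma> * (\<Sum>n=1..dim_row Z. 1 / real n)) * W"
    using ibp_prob_factor[OF fa] by blast
  define H where "H = (\<Sum>n=1..dim_row Z. 1 / real n)"
  have "((\<lambda>s. s * exp (- lam2 / (2 * s))) \<longlongrightarrow> 0) (at_right 0)"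
  proof (rule tendsto_sandwich[of "\<lambda>_. 0" _ _ "\<lambda>s. s"])
    show "\<forall>\<^sub>F s in at_right 0. 0 \<le> s * exp (- lam2 / (2 * s))"
      using eventually_at_right_less by eventually_elim simp
    show "\<forall>\<^sub>F s in at_right 0. s * exp (- lam2 / (2 * s)) \<le> s"
      using eventually_at_right_less by eventually_elim (use lam2 in simp)
  qed (auto intro: tendsto_ident_at)
  then have "((\<lambda>s. real (dim_col Z) * lam2 + 2 * H * (s * exp (- lam2 / (2 * s))) - 2 * s * ln W)
               \<longlongrightarrow> real (dim_col Z) * lam2 + 2 * H * 0 - 2 * 0 * ln W) (at_right 0)"
    by (intro tendsto_intros)
  moreover have "\<forall>\<^sub>F s in at_right 0.
      real (dim_col Z) * lam2 + 2 * H * (s * exp (- lam2 / (2 * s))) - 2 * s * ln W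
      = - 2 * s * ln (ibp_prob (exp (- lam2 / (2 * s))) Z)"
    using eventually_at_right_less
  proof eventually_elim
    case (elim s)
    then show ?case unfolding ibp H_def[symmetric] using W by (simp add: ln_mult ln_realpow field_simps)
  qed
  ultimately show ?thesis by (auto elim: Lim_transform_eventually)
qed

theorem mainTheorem5:
  fixes N D :: nat and X Z :: "real mat" and lam2 rho2 :: real
  assumes "N \<ge> 1" and "D \<ge> 1"
    and "X \<in> carrier_mat N D"
    and "dim_row Z = N"
    and "feature_allocation Z"
    and "invertible_mat (Z\<^sup>T * Z)"
    and "lam2 > 0" and "rho2 > 0"
    and "mat_trace (X\<^sup>T * (1\<^sub>m N - Z * the (mat_inverse (Z\<^sup>T * Z)) * Z\<^sup>T) * X)
           + real (dim_col Z) * lam2 \<noteq> 0"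
  shows "(\<lambda>s. - 2 * s * ln (joint_XZ s lam2 rho2 X Z)) \<sim>[at_right 0]
         (\<lambda>s. mat_trace (X\<^sup>T * (1\<^sub>m N - Z * the (mat_inverse (Z\<^sup>T * Z)) * Z\<^sup>T) * X)
               + real (dim_col Z) * lam2)"
proof -
  have Z: "Z \<in> carrier_mat N (dim_col Z)" using assms(4) by auto
  let ?pX = "\<lambda>s. marg_XZ s rho2 X Z" and ?pZ = "\<lambda>s. ibp_prob (exp (- lam2 / (2 * s))) Z"
  have "((\<lambda>s. - 2 * s * ln (?pX s) + - 2 * s * ln (?pZ s))
         \<longlongrightarrow> mat_trace (X\<^sup>T * (1\<^sub>m N - Z * the (mat_inverse (Z\<^sup>T * Z)) * Z\<^sup>T) * X)
             + real (dim_col Z) * lam2) (at_right 0)"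
    using assms(5-8) by (intro tendsto_add marg_XZ_log_limit[OF assms(3) Z] ibp_prob_log_limit) auto
  moreover have "\<forall>\<^sub>F s in at_right 0.
      - 2 * s * ln (?pX s) + - 2 * s * ln (?pZ s) = - 2 * s * ln (joint_XZ s lam2 rho2 X Z)"
    using eventually_at_right_less
  proof eventually_elim
    case (elim s)
    then have "0 < ?pX s" "0 < ?pZ s"
      using assms(5,8) by (auto intro: marg_XZ_pos[OF assms(3) Z] ibp_prob_pos)
    then show ?case unfolding joint_XZ_def by (simp add: ln_mult algebra_simps)
  qed
  ultimately show ?thesis
    using assms(9) by (auto intro: tendsto_imp_asymp_equiv_const elim: Lim_transform_eventually)
qed

end
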